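(* Let $m,n\in\mathbf{N}$. If there is a set family of shape $(m^n)$ and type $\lambda$, and $\mu$ is a partition with $\mu\rhd\lambda$ (strictly in the dominance order), then there are two distinct set families of shape $(m^n)$ and type $\mu$.
   Context: A set family of shape $(m^n)$ is a collection of $n$ distinct $m$-subsets of $\mathbf{N}=\{1,2,\dots\}$. If $\lambda$ is a partition with largest part $a$ and conjugate $\lambda'$, a set family has type $\lambda$ if for each $i\in\{1,\dots,a\}$ exactly $\lambda'_i$ of its sets contain $i$. *)

theory Defs
  imports Main
begin

definition is_partition :: "nat list \<Rightarrow> bool" where
  "is_partition lam \<longleftrightarrow> sorted_wrt (\<ge>) lam \<and> 0 \<notin> set lam"

definition largest_part :: "nat list \<Rightarrow> nat" where
  "largest_part lam = (if lam = [] then 0 else hd lam)"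

text \<open>Conjugate partition: the i-th part of lam' is the number of parts of lam that are at least i.\<close>
definition conj_part :: "nat list \<Rightarrow> nat \<Rightarrow> nat" where
  "conj_part lam i = length (filter (\<lambda>x. i \<le> x) lam)"

definition strictly_dominates :: "nat list \<Rightarrow> nat list \<Rightarrow> bool" where
  "strictly_dominates mu lam \<longleftrightarrow>
     sum_list mu = sum_list lam \<and>
     (\<forall>k. sum_list (take k lam) \<le> sum_list (take k mu)) \<and> mu \<noteq> lam"

text \<open>A set family of shape (m^n): n distinct m-subsets of N = {1,2,...}.\<close>
definition set_family_shape :: "nat \<Rightarrow> nat \<Rightarrow> nat set set \<Rightarrow> bool" where
  "set_family_shape m n F \<longleftrightarrow> finite F \<and> card F = n \<and>
     (\<forall>S\<in>F. finite S \<and> card S = m \<and> 0 \<notin> S)"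

definition has_type :: "nat list \<Rightarrow> nat set set \<Rightarrow> bool" where
  "has_type lam F \<longleftrightarrow>
     (\<forall>i\<in>{1..largest_part lam}. card {S\<in>F. i \<in> S} = conj_part lam i)"

end

theory Submission
  imports Defs "HOL-Library.Multiset"
begin

text \<open>
  Relabel the ground set so that the elements above the largest part \<open>a\<close> of \<open>\<lambda>\<close> move beyond the
  largest part \<open>K\<close> of \<open>\<mu>\<close>; the occurrence vector on \<open>{1..K}\<close> is then \<open>\<lambda>'\<close>. Strict dominance
  \<open>\<mu> \<rhd> \<lambda>\<close> reverses to \<open>\<lambda>' \<rhd> \<mu>'\<close>, so the partial sums of the occurrence vector dominate those of
  \<open>\<mu>'\<close>. Let \<open>c\<close> be the first index where the vector exceeds \<open>\<mu>'\<close> and \<open>d > c\<close> the first index where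
  the partial sums meet again; since \<open>\<mu>'\<close> is weakly decreasing, \<open>c\<close> lies in at least two more sets
  than \<open>d\<close>, so there are at least two sets containing \<open>c\<close> but not \<open>d\<close> whose exchange of \<open>c\<close> for \<open>d\<close>
  does not collide with another set of the family. Exchanging in either one gives two distinct
  families with the same occurrence vector, strictly closer to \<open>\<mu>'\<close>; iterating the exchange on
  both in parallel ends at two distinct families of type \<open>\<mu>\<close>.
\<close>

section \<open>Conjugate partitions\<close>

lemma conj_part_Nil: "conj_part [] i = 0"
  by (simp add: conj_part_def)

lemma conj_part_Cons: "conj_part (x # xs) i = (if i \<le> x then 1 else 0) + conj_part xs i"
  by (simp add: conj_part_def)

lemma conj_part_eq_count_list_plus: "conj_part xs x = count_list xs x + conj_part xs (Suc x)"
  by (induction xs) (auto simp: conj_part_def)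

lemma conj_part_antimono: "antimono (conj_part xs)"
proof (rule antimonoI)
  show "conj_part xs j \<le> conj_part xs i" if "i \<le> j" for i j
    using that by (induction xs) (auto simp: conj_part_def)
qed

lemma conj_part_eq_0: "\<forall>x\<in>set xs. x < i \<Longrightarrow> conj_part xs i = 0"
  by (induction xs) (auto simp: conj_part_def)

lemma sum_indicator_le: "(\<Sum>i=1..k. if i \<le> (x::nat) then 1 else 0::nat) = min x k"
proof -
  have "(\<Sum>i=1..k. if i \<le> x then 1 else 0::nat) = card {i\<in>{1..k}. i \<le> x}"
    by (simp add: sum.If_cases Int_def conj_commute)
  also have "{i\<in>{1..k}. i \<le> x} = {1..min x k}"
    by auto
  finally show ?thesis
    by simp
qed

lemma sum_conj_part: "(\<Sum>i=1..k. conj_part xs i) = (\<Sum>x\<leftarrow>xs. min x k)"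
  by (induction xs) (simp_all only: conj_part_Nil conj_part_Cons sum.distrib sum_indicator_le, simp_all)

lemma sum_conj_part_eq_sum_list:
  "\<forall>x\<in>set xs. x \<le> k \<Longrightarrow> (\<Sum>i=1..k. conj_part xs i) = sum_list xs"
  unfolding sum_conj_part by (simp add: map_idI)

lemma sum_list_le_sum_list_diff: "sum_list xs \<le> (\<Sum>x\<leftarrow>xs. x - k) + length xs * (k::nat)"
  by (induction xs) auto

lemma sum_list_diff_eq: "\<forall>x\<in>set xs. k < x \<Longrightarrow> (\<Sum>x\<leftarrow>xs. x - k) + length xs * (k::nat) = sum_list xs"
  by (induction xs) auto

lemma sum_list_map_take_le: "(\<Sum>x\<leftarrow>take r xs. f x) \<le> (\<Sum>x\<leftarrow>xs. (f x :: nat))"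
  by (metis append_take_drop_id le_add1 map_append sum_list_append)

text \<open>Only the parts of \<open>lam\<close> exceeding \<open>k\<close> contribute on the left; they form a prefix, to which dominance applies.\<close>
lemma sum_list_excess_le:
  assumes sorted: "sorted_wrt (\<ge>) lam"
    and dom: "\<forall>j. sum_list (take j lam) \<le> sum_list (take j mu)"
  shows "(\<Sum>x\<leftarrow>lam. x - k) \<le> (\<Sum>x\<leftarrow>mu. x - (k::nat))"
proof -
  define r where "r = length (takeWhile (\<lambda>x. k < x) lam)"
  have take_r: "takeWhile (\<lambda>x. k < x) lam = take r lam"
    unfolding r_def by (rule takeWhile_eq_take)
  have "\<forall>x\<in>set (dropWhile (\<lambda>x. k < x) lam). x \<le> k"
    using sorted by (induction lam) (auto split: if_splits)
  then have "(\<Sum>x\<leftarrow>dropWhile (\<lambda>x. k < x) lam. x - k) = 0"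
    by (simp add: sum_list_eq_0_iff)
  then have "(\<Sum>x\<leftarrow>lam. x - k) = (\<Sum>x\<leftarrow>take r lam. x - k)"
    by (metis take_r add_0_right map_append sum_list_append takeWhile_dropWhile_id)
  also have "\<dots> + r * k = sum_list (take r lam)"
  proof -
    have "\<forall>x\<in>set (take r lam). k < x"
      unfolding take_r[symmetric] by (auto dest: set_takeWhileD)
    moreover have "length (take r lam) = r"
      unfolding r_def using length_takeWhile_le[of "\<lambda>x. k < x" lam] by simp
    ultimately show ?thesis
      using sum_list_diff_eq by metis
  qed
  also have "\<dots> \<le> sum_list (take r mu)"
    using dom by blast
  also have "\<dots> \<le> (\<Sum>x\<leftarrow>take r mu. x - k) + length (take r mu) * k"
    by (rule sum_list_le_sum_list_diff)
  also have "\<dots> \<le> (\<Sum>x\<leftarrow>take r mu. x - k) + r * k"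
    by (intro add_left_mono mult_le_mono1) simp
  finally show ?thesis
    using sum_list_map_take_le[of "\<lambda>x. x - k" r mu] by linarith
qed

lemma sum_list_min_plus_excess: "(\<Sum>x\<leftarrow>xs. min x k) + (\<Sum>x\<leftarrow>xs. x - k) = sum_list (xs::nat list)"
  by (induction xs) auto

lemma strictly_dominates_conj_partial_sums:
  assumes "is_partition lam" "strictly_dominates mu lam"
  shows "(\<Sum>i=1..k. conj_part mu i) \<le> (\<Sum>i=1..k. conj_part lam i)"
proof -
  have "(\<Sum>x\<leftarrow>lam. x - k) \<le> (\<Sum>x\<leftarrow>mu. x - k)"
    using assms by (intro sum_list_excess_le) (auto simp: is_partition_def strictly_dominates_def)
  moreover have "sum_list mu = sum_list lam"
    using assms(2) by (simp add: strictly_dominates_def)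
  ultimately show ?thesis
    using sum_list_min_plus_excess[of k lam] sum_list_min_plus_excess[of k mu]
    unfolding sum_conj_part by simp
qed

lemma largest_part_eq_sum_take_1: "largest_part xs = sum_list (take 1 xs)"
  by (cases xs) (simp_all add: largest_part_def)

lemma strictly_dominates_largest_part_le:
  "strictly_dominates mu lam \<Longrightarrow> largest_part lam \<le> largest_part mu"
  by (simp add: strictly_dominates_def largest_part_eq_sum_take_1)

lemma is_partition_le_largest_part: "is_partition xs \<Longrightarrow> x \<in> set xs \<Longrightarrow> x \<le> largest_part xs"
  by (cases xs) (auto simp: is_partition_def largest_part_def)

lemma conj_part_inj:
  assumes "is_partition lam" "is_partition mu" "\<forall>i\<ge>1. conj_part lam i = conj_part mu i"
  shows "lam = mu"
proof -
  have "count_list lam x = count_list mu x" for x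
  proof (cases "x = 0")
    case True
    then show ?thesis
      using assms(1,2) by (metis count_list_0_iff is_partition_def)
  next
    case False
    then show ?thesis
      using assms(3) conj_part_eq_count_list_plus[of lam x] conj_part_eq_count_list_plus[of mu x]
      by simp
  qed
  then have "mset (rev mu) = mset (rev lam)"
    by (simp add: multiset_eq_iff count_mset)
  moreover have "sorted (rev lam)" "sorted (rev mu)"
    using assms(1,2) by (auto simp: is_partition_def sorted_wrt_rev)
  ultimately show ?thesis
    by (metis properties_for_sort rev_rev_ident sorted_sort_id)
qed

lemma conj_part_differs:
  assumes "is_partition lam" "is_partition mu" "lam \<noteq> mu"
    and "largest_part lam \<le> K" "largest_part mu \<le> K"
  shows "\<exists>i\<in>{1..K}. conj_part lam i \<noteq> conj_part mu i"
proof (rule ccontr)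
  assume "\<not> ?thesis"
  moreover have "conj_part xs i = 0" if "is_partition xs" "largest_part xs \<le> K" "K < i" for xs i
    using that by (intro conj_part_eq_0) (auto dest: is_partition_le_largest_part)
  ultimately have "\<forall>i\<ge>1. conj_part lam i = conj_part mu i"
    using assms by (metis atLeastAtMost_iff not_le)
  then show False
    using assms conj_part_inj by blast
qed

section \<open>Occurrence counts of set families\<close>

definition occ :: "nat set set \<Rightarrow> nat \<Rightarrow> nat" where
  "occ F i = card {S\<in>F. i \<in> S}"

definition occ_sum :: "nat set set \<Rightarrow> nat \<Rightarrow> nat" where
  "occ_sum F k = (\<Sum>i=1..k. occ F i)"

lemma occ_sum_last: "0 < k \<Longrightarrow> occ_sum F k = occ_sum F (k - 1) + occ F k"
  by (cases k) (simp_all add: occ_sum_def)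

lemma has_type_iff_occ: "has_type lam F \<longleftrightarrow> (\<forall>i\<in>{1..largest_part lam}. occ F i = conj_part lam i)"
  by (simp add: has_type_def occ_def)

definition exchange :: "nat \<Rightarrow> nat \<Rightarrow> nat set \<Rightarrow> nat set set \<Rightarrow> nat set set" where
  "exchange c d S F = insert (insert d (S - {c})) (F - {S})"

lemma set_family_shape_exchange:
  assumes shape: "set_family_shape m n F" and S: "S \<in> F" "c \<in> S" "d \<notin> S"
    and fresh: "insert d (S - {c}) \<notin> F" and "0 < d"
  shows "set_family_shape m n (exchange c d S F)"
proof -
  have fin: "finite F" "finite S" and "card S = m"
    using shape S by (auto simp: set_family_shape_def)
  moreover have "0 < m"
    using fin S \<open>card S = m\<close> card_gt_0_iff by blast
  ultimately have "card (insert d (S - {c})) = m"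
    using S by (simp add: card_insert_disjoint)
  moreover have "card (exchange c d S F) = card F"
    using fin S fresh card_Suc_Diff1[OF fin(1) S(1)] by (simp add: exchange_def card_insert_disjoint)
  ultimately show ?thesis
    using shape S \<open>0 < d\<close> by (auto simp: set_family_shape_def exchange_def)
qed

lemma occ_exchange:
  assumes "finite F" and S: "S \<in> F" "c \<in> S" "d \<notin> S" and fresh: "insert d (S - {c}) \<notin> F"
  shows "occ (exchange c d S F) i + (if i = c then 1 else 0) = occ F i + (if i = d then 1 else 0)"
proof -
  let ?T = "insert d (S - {c})"
  have fin: "finite {X\<in>F. i \<in> X}"
    using \<open>finite F\<close> by simp
  have "{X\<in>exchange c d S F. i \<in> X} = (if i \<in> ?T then insert ?T else id) ({X\<in>F. i \<in> X} - {S})"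
    by (auto simp: exchange_def)
  then have "occ (exchange c d S F) i = card ({X\<in>F. i \<in> X} - {S}) + (if i \<in> ?T then 1 else 0)"
    using fresh fin by (simp add: occ_def)
  moreover have "card ({X\<in>F. i \<in> X} - {S}) + (if i \<in> S then 1 else 0) = occ F i"
    using fin S by (auto simp: occ_def card_Suc_Diff1 simp del: card_Diff_insert)
  ultimately show ?thesis
    using S by auto
qed

lemma occ_sum_exchange:
  assumes "\<And>i. occ F' i + (if i = c then 1 else 0) = occ F i + (if i = d then 1 else 0)"
    and "0 < c" "0 < d"
  shows "occ_sum F' k + (if c \<le> k then 1 else 0) = occ_sum F k + (if d \<le> k then 1 else 0)"
proof -
  have "(\<Sum>i=1..k. occ F' i + (if i = c then 1 else 0)) = (\<Sum>i=1..k. occ F i + (if i = d then 1 else 0))"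
    using assms(1) by simp
  then show ?thesis
    using assms(2,3) by (simp add: occ_sum_def sum.distrib sum.delta)
qed

text \<open>
  Exchanging \<open>c\<close> for \<open>d\<close> is injective on the sets containing \<open>c\<close> but not \<open>d\<close>, and the collisions
  land in sets containing \<open>d\<close> but not \<open>c\<close>; so at most \<open>occ F d\<close> sets are blocked.
\<close>
lemma two_exchangeable_members:
  assumes "finite F" and gap: "occ F d + 2 \<le> occ F c"
  obtains S1 S2 where "S1 \<in> F" "S2 \<in> F" "S1 \<noteq> S2" "c \<in> S1" "d \<notin> S1" "c \<in> S2" "d \<notin> S2"
    "insert d (S1 - {c}) \<notin> F" "insert d (S2 - {c}) \<notin> F"
proof -
  have "c \<noteq> d"
    using gap by auto
  define sw where "sw S = insert d (S - {c})" for S :: "nat set"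
  define A where "A = {S\<in>F. c \<in> S \<and> d \<notin> S}"
  define B where "B = {S\<in>F. d \<in> S \<and> c \<notin> S}"
  define C where "C = {S\<in>F. c \<in> S \<and> d \<in> S}"
  define Blocked where "Blocked = {S\<in>A. sw S \<in> F}"
  have fin: "finite A" "finite B" "finite C" "finite Blocked"
    using \<open>finite F\<close> by (auto simp: A_def B_def C_def Blocked_def)
  have "{S\<in>F. c \<in> S} = A \<union> C" "{S\<in>F. d \<in> S} = B \<union> C" "A \<inter> C = {}" "B \<inter> C = {}"
    by (auto simp: A_def B_def C_def)
  then have occ_c: "occ F c = card A + card C" and occ_d: "occ F d = card B + card C"
    by (simp_all add: occ_def card_Un_disjoint fin)
  have "inj_on sw A"
  proof (rule inj_onI)
    fix S T assume "S \<in> A" "T \<in> A" "sw S = sw T"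
    then have "insert c (sw S - {d}) = insert c (sw T - {d})"
      by simp
    then show "S = T"
      using \<open>S \<in> A\<close> \<open>T \<in> A\<close> \<open>c \<noteq> d\<close> by (auto simp: A_def sw_def insert_absorb)
  qed
  then have "card Blocked = card (sw ` Blocked)"
    by (simp add: card_image inj_on_subset Blocked_def)
  also have "\<dots> \<le> card B"
    using \<open>c \<noteq> d\<close> by (intro card_mono fin) (auto simp: Blocked_def B_def sw_def A_def)
  finally have "2 \<le> card (A - Blocked)"
    using occ_c occ_d gap by (simp add: card_Diff_subset fin Blocked_def)
  then obtain S1 S2 where "S1 \<in> A - Blocked" "S2 \<in> A - Blocked" "S1 \<noteq> S2"
    using card_le_Suc0_iff_eq[of "A - Blocked"] fin by fastforce
  then show ?thesis
    using that by (auto simp: A_def Blocked_def sw_def)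
qed

section \<open>Balancing an occurrence vector\<close>

lemma exists_first_excess:
  fixes g :: "nat \<Rightarrow> nat"
  defines "G k \<equiv> \<Sum>i=1..k. g i"
  assumes dom: "\<forall>k\<le>K. G k \<le> occ_sum F k"
    and differs: "\<exists>i\<in>{1..K}. occ F i \<noteq> g i"
  obtains c where "0 < c" "c \<le> K" "g c < occ F c" "G c < occ_sum F c"
proof -
  define c where "c = (LEAST i. i \<in> {1..K} \<and> occ F i \<noteq> g i)"
  have c: "c \<in> {1..K}" "occ F c \<noteq> g c"
    using LeastI_ex[OF differs[unfolded Bex_def]] by (auto simp: c_def)
  have "occ F i = g i" if "1 \<le> i" "i < c" for i
  proof -
    have "\<not> (i \<in> {1..K} \<and> occ F i \<noteq> g i)"
      using \<open>i < c\<close> unfolding c_def by (rule not_less_Least)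
    then show ?thesis
      using c(1) that by auto
  qed
  then have below: "occ_sum F (c - 1) = G (c - 1)"
    unfolding occ_sum_def G_def by (intro sum.cong) auto
  have G_c: "G c = G (c - 1) + g c"
    using c(1) by (cases c) (simp_all add: G_def)
  have occ_sum_c: "occ_sum F c = occ_sum F (c - 1) + occ F c"
    using c(1) by (simp add: occ_sum_last)
  have "g c \<le> occ F c"
    using dom c(1) below G_c occ_sum_c by (metis add_le_cancel_left atLeastAtMost_iff)
  with c(2) have "g c < occ F c"
    by simp
  moreover from this have "G c < occ_sum F c"
    using below G_c occ_sum_c by simp
  ultimately show ?thesis
    using c(1) by (intro that) auto
qed

lemma exists_transfer_pair:
  fixes g :: "nat \<Rightarrow> nat"
  defines "G k \<equiv> \<Sum>i=1..k. g i"
  assumes "antimono g"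
    and dom: "\<forall>k\<le>K. G k \<le> occ_sum F k" and tot: "occ_sum F K = G K"
    and differs: "\<exists>i\<in>{1..K}. occ F i \<noteq> g i"
  obtains c d where "0 < c" "c < d" "d \<le> K" "occ F d + 2 \<le> occ F c"
    "\<And>k. c \<le> k \<Longrightarrow> k < d \<Longrightarrow> G k < occ_sum F k"
proof -
  obtain c where c: "0 < c" "c \<le> K" and g_c: "g c < occ F c" and "G c < occ_sum F c"
    using exists_first_excess[of K g F] dom differs unfolding G_def by blast
  then have "c < K"
    using tot c(1) by (cases "c = K") auto
  define d where "d = (LEAST k. c < k \<and> k \<le> K \<and> occ_sum F k = G k)"
  have "\<exists>k. c < k \<and> k \<le> K \<and> occ_sum F k = G k"
    using \<open>c < K\<close> tot by blast
  then have d: "c < d" "d \<le> K" "occ_sum F d = G d"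
    unfolding d_def by (metis (mono_tags, lifting) LeastI_ex)+
  have strict: "G k < occ_sum F k" if "c \<le> k" "k < d" for k
  proof (cases "k = c")
    case False
    have "\<not> (c < k \<and> k \<le> K \<and> occ_sum F k = G k)"
      using \<open>k < d\<close> unfolding d_def by (rule not_less_Least)
    moreover have "c < k" "k \<le> K"
      using that d False by auto
    ultimately show ?thesis
      using dom by (metis le_neq_trans)
  qed (use \<open>G c < occ_sum F c\<close> in simp)
  have "G (d - 1) < occ_sum F (d - 1)"
    using strict[of "d - 1"] d by simp
  moreover have "G d = G (d - 1) + g d"
    using d by (cases d) (simp_all add: G_def)
  ultimately have "occ F d < g d"
    using d occ_sum_last[of d F] by simp
  moreover have "g d \<le> g c"
    using \<open>antimono g\<close> d by (simp add: antimonoD)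
  ultimately have "occ F d + 2 \<le> occ F c"
    using g_c by simp
  with c(1) d(1,2) strict show ?thesis
    by (intro that) auto
qed

lemma partial_sums_after_transfer:
  fixes p q G :: "nat \<Rightarrow> nat"
  assumes shift: "\<And>k. p k + (if c \<le> k then 1 else 0) = q k + (if d \<le> k then 1 else 0)"
    and cd: "0 < c" "c < d" "d \<le> K"
    and dom: "\<forall>k\<le>K. G k \<le> q k" and strict: "\<And>k. c \<le> k \<Longrightarrow> k < d \<Longrightarrow> G k < q k"
    and tot: "q K = G K"
  shows "\<forall>k\<le>K. G k \<le> p k" and "p K = G K" and "(\<Sum>k=1..K. p k) < (\<Sum>k=1..K. q k)"
proof -
  show "\<forall>k\<le>K. G k \<le> p k"
  proof (intro allI impI)
    fix k assume "k \<le> K"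
    show "G k \<le> p k"
      using dom \<open>k \<le> K\<close> strict[of k] shift[of k] cd by (cases "c \<le> k \<and> k < d") auto
  qed
  show "p K = G K"
    using tot shift[of K] cd by simp
  show "(\<Sum>k=1..K. p k) < (\<Sum>k=1..K. q k)"
  proof (rule sum_strict_mono_ex1)
    show "\<forall>k\<in>{1..K}. p k \<le> q k"
    proof
      fix k
      show "p k \<le> q k"
        using shift[of k] cd by (auto split: if_splits)
    qed
    show "\<exists>k\<in>{1..K}. p k < q k"
      using shift[of c] cd by (intro bexI[of _ c]) auto
  qed simp
qed

lemma exchange_step:
  fixes g :: "nat \<Rightarrow> nat"
  assumes "antimono g" and shape: "set_family_shape m n F"
    and dom: "\<forall>k\<le>K. (\<Sum>i=1..k. g i) \<le> occ_sum F k" and tot: "occ_sum F K = (\<Sum>i=1..K. g i)"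
    and differs: "\<exists>i\<in>{1..K}. occ F i \<noteq> g i"
  obtains F1 F2 where "F1 \<noteq> F2" "set_family_shape m n F1" "set_family_shape m n F2" "occ F2 = occ F1"
    "\<forall>k\<le>K. (\<Sum>i=1..k. g i) \<le> occ_sum F1 k" "occ_sum F1 K = (\<Sum>i=1..K. g i)"
    "(\<Sum>k=1..K. occ_sum F1 k) < (\<Sum>k=1..K. occ_sum F k)"
proof -
  obtain c d where cd: "0 < c" "c < d" "d \<le> K" and gap: "occ F d + 2 \<le> occ F c"
    and strict: "\<And>k. c \<le> k \<Longrightarrow> k < d \<Longrightarrow> (\<Sum>i=1..k. g i) < occ_sum F k"
    using exists_transfer_pair[OF assms(1) dom tot differs] by blast
  have "finite F"
    using shape by (simp add: set_family_shape_def)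
  then obtain S1 S2 where S: "S1 \<in> F" "S2 \<in> F" "S1 \<noteq> S2" "c \<in> S1" "d \<notin> S1" "c \<in> S2" "d \<notin> S2"
    and fresh: "insert d (S1 - {c}) \<notin> F" "insert d (S2 - {c}) \<notin> F"
    using gap by (rule two_exchangeable_members)
  define F1 where "F1 = exchange c d S1 F"
  define F2 where "F2 = exchange c d S2 F"
  have "S1 \<in> F2 - F1"
    using S by (auto simp: F1_def F2_def exchange_def)
  then have distinct: "F1 \<noteq> F2"
    by blast
  have shape1: "set_family_shape m n F1" and shape2: "set_family_shape m n F2"
    unfolding F1_def F2_def using shape S fresh cd by (auto intro: set_family_shape_exchange)
  have occ1: "occ F1 i + (if i = c then 1 else 0) = occ F i + (if i = d then 1 else 0)" for i
    unfolding F1_def using \<open>finite F\<close> S(1,4,5) fresh(1) by (rule occ_exchange)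
  have occ2: "occ F2 i + (if i = c then 1 else 0) = occ F i + (if i = d then 1 else 0)" for i
    unfolding F2_def using \<open>finite F\<close> S(2,6,7) fresh(2) by (rule occ_exchange)
  have "occ F2 = occ F1"
  proof
    show "occ F2 i = occ F1 i" for i
      using occ1[of i] occ2[of i] by (metis add_right_cancel)
  qed
  have shift: "occ_sum F1 k + (if c \<le> k then 1 else 0) = occ_sum F k + (if d \<le> k then 1 else 0)" for k
    using occ1 cd by (intro occ_sum_exchange) auto
  note partial_sums_after_transfer[where G = "\<lambda>k. \<Sum>i=1..k. g i", OF shift cd dom strict tot]
  with distinct shape1 shape2 \<open>occ F2 = occ F1\<close> show ?thesis
    by (rule that)
qed

lemma two_families_with_occurrences:
  fixes g :: "nat \<Rightarrow> nat"
  assumes "antimono g" "set_family_shape m n F"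
    and "\<forall>k\<le>K. (\<Sum>i=1..k. g i) \<le> occ_sum F k" "occ_sum F K = (\<Sum>i=1..K. g i)"
    and "\<exists>i\<in>{1..K}. occ F i \<noteq> g i"
  shows "\<exists>F1 F2. F1 \<noteq> F2 \<and> set_family_shape m n F1 \<and> set_family_shape m n F2
           \<and> (\<forall>i\<in>{1..K}. occ F1 i = g i) \<and> (\<forall>i\<in>{1..K}. occ F2 i = g i)"
  using assms(2-)
proof (induction "\<Sum>k=1..K. occ_sum F k" arbitrary: F rule: less_induct)
  case less
  obtain F1 F2 where "F1 \<noteq> F2" "set_family_shape m n F1" "set_family_shape m n F2" "occ F2 = occ F1"
    and step: "\<forall>k\<le>K. (\<Sum>i=1..k. g i) \<le> occ_sum F1 k" "occ_sum F1 K = (\<Sum>i=1..K. g i)"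
      "(\<Sum>k=1..K. occ_sum F1 k) < (\<Sum>k=1..K. occ_sum F k)"
    using exchange_step[OF assms(1) less.prems] by blast
  show ?case
  proof (cases "\<forall>i\<in>{1..K}. occ F1 i = g i")
    case True
    with \<open>F1 \<noteq> F2\<close> \<open>set_family_shape m n F1\<close> \<open>set_family_shape m n F2\<close> \<open>occ F2 = occ F1\<close>
    show ?thesis
      by metis
  next
    case False
    with less.hyps step \<open>set_family_shape m n F1\<close> show ?thesis
      by blast
  qed
qed

lemma exists_family_with_conj_occurrences:
  assumes "is_partition lam" "set_family_shape m n F" "has_type lam F"
  shows "\<exists>F0. set_family_shape m n F0 \<and> (\<forall>i\<in>{1..K}. occ F0 i = conj_part lam i)"
proof -
  define a where "a = largest_part lam"
  define h where "h x = (if x \<le> a then x else x + K)" for x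
  have "inj h"
    by (auto simp: inj_def h_def)
  then have inj_image: "inj_on (image h) X" for X
    by (auto simp: inj_on_def inj_image_eq_iff)
  have F: "finite F" "card F = n" "\<And>S. S \<in> F \<Longrightarrow> finite S \<and> card S = m \<and> 0 \<notin> S"
    using assms(2) by (auto simp: set_family_shape_def)
  have "set_family_shape m n (image h ` F)"
    using F card_image[OF inj_image] card_image[OF inj_on_subset[OF \<open>inj h\<close>]]
    by (auto simp: set_family_shape_def h_def split: if_splits)
  moreover have "occ (image h ` F) i = conj_part lam i" if i: "i \<in> {1..K}" for i
  proof -
    have "i \<in> h ` S \<longleftrightarrow> i \<le> a \<and> i \<in> S" if "0 \<notin> S" for S
      using that i by (force simp: h_def)
    then have "{T\<in>image h ` F. i \<in> T} = image h ` {S\<in>F. i \<le> a \<and> i \<in> S}"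
      using F(3) by auto
    then have "occ (image h ` F) i = card {S\<in>F. i \<le> a \<and> i \<in> S}"
      by (simp add: occ_def card_image[OF inj_image])
    also have "\<dots> = conj_part lam i"
    proof (cases "i \<le> a")
      case False
      then have "conj_part lam i = 0"
        using assms(1) by (intro conj_part_eq_0) (auto simp: a_def dest: is_partition_le_largest_part)
      then show ?thesis
        using False by simp
    qed (use assms(3) i in \<open>simp add: has_type_def a_def\<close>)
    finally show ?thesis .
  qed
  ultimately show ?thesis
    by blast
qed

theorem proposition5p1:
  fixes m n :: nat and lam mu :: "nat list" and F :: "nat set set"
  assumes "1 \<le> m" and "1 \<le> n"
    and "is_partition lam" and "is_partition mu"
    and "set_family_shape m n F" and "has_type lam F"
    and "strictly_dominates mu lam"
  shows "\<exists>F1 F2. F1 \<noteq> F2 \<and> set_family_shape m n F1 \<and> has_type mu F1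
                \<and> set_family_shape m n F2 \<and> has_type mu F2"
proof -
  define K where "K = largest_part mu"
  have "largest_part lam \<le> K"
    unfolding K_def using assms(7) by (rule strictly_dominates_largest_part_le)
  obtain F0 where shape0: "set_family_shape m n F0" and occ0: "\<forall>i\<in>{1..K}. occ F0 i = conj_part lam i"
    using exists_family_with_conj_occurrences[OF assms(3,5,6)] by blast
  have occ_sum0: "occ_sum F0 k = (\<Sum>i=1..k. conj_part lam i)" if "k \<le> K" for k
    unfolding occ_sum_def using occ0 that by (intro sum.cong) auto
  have "\<forall>k\<le>K. (\<Sum>i=1..k. conj_part mu i) \<le> occ_sum F0 k"
    using occ_sum0 strictly_dominates_conj_partial_sums[OF assms(3,7)] by simp
  moreover have "occ_sum F0 K = (\<Sum>i=1..K. conj_part mu i)"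
  proof -
    have "\<forall>x\<in>set lam. x \<le> K" "\<forall>x\<in>set mu. x \<le> K"
      using assms(3,4) \<open>largest_part lam \<le> K\<close> by (auto simp: K_def dest: is_partition_le_largest_part)
    then have "(\<Sum>i=1..K. conj_part lam i) = sum_list lam" "(\<Sum>i=1..K. conj_part mu i) = sum_list mu"
      by (simp_all only: sum_conj_part_eq_sum_list)
    then show ?thesis
      using occ_sum0[of K] assms(7) by (simp add: strictly_dominates_def)
  qed
  moreover have "\<exists>i\<in>{1..K}. occ F0 i \<noteq> conj_part mu i"
    using conj_part_differs[OF assms(3,4)] assms(7) occ0 \<open>largest_part lam \<le> K\<close>
    by (auto simp: K_def strictly_dominates_def)
  ultimately have "\<exists>F1 F2. F1 \<noteq> F2 \<and> set_family_shape m n F1 \<and> set_family_shape m n F2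
      \<and> (\<forall>i\<in>{1..K}. occ F1 i = conj_part mu i) \<and> (\<forall>i\<in>{1..K}. occ F2 i = conj_part mu i)"
    by (rule two_families_with_occurrences[OF conj_part_antimono shape0])
  then show ?thesis
    unfolding has_type_iff_occ K_def[symmetric] by blast
qed

end
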